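(* Let $X$ be an exponential vector space over a field $K$. If $x\in Q(X)$, then $L(x)=L(y)$ for every $y\in X\smallsetminus X_0$ with $y\leq x$.
   Context: An exponential vector space (evs) over a field $K$ is a partially ordered set $(X,\leq)$ with a binary operation $+$ on $X$ and a map $K\times X\to X$, $(\alpha,x)\mapsto \alpha x$, such that: (A1) $(X,+)$ is a commutative semigroup with identity $\theta$; (A2) $x\leq y$ implies $x+z\leq y+z$ and $\alpha x\leq \alpha y$ for all $z\in X$, $\alpha\in K$; (A3) $\alpha(x+y)=\alpha x+\alpha y$, $\alpha(\beta x)=(\alpha\beta)x$, $(\alpha+\beta)x\leq \alpha x+\beta x$, $1x=x$; (A4) $\alpha x=\theta$ iff $\alpha=0$ or $x=\theta$; (A5) $x+(-1)x=\theta$ iff $x\in X_0$, where $X_0:=\{z\in X: y\not\leq z \text{ for all } y\in X\smallsetminus\{z\}\}$ (the set of minimal elements, called the primitive space; it is a vector space over $K$); (A6) for each $x\in X$ there is $p\in X_0$ with $p\leq x$. For $x\in X\smallsetminus X_0$ let $L(x):=\{z\in X: z\geq \alpha x+p \text{ for some } \alpha\in K\smallsetminus\{0\},\ p\in X_0\}$. For $x\in X$ write $\downarrow x:=\{z\in X: z\leq x\}$. The feasible set is $Q(X):=\{x\in X\smallsetminus X_0: (\downarrow x\smallsetminus X_0)\subseteq L(x)\}$. *)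

theory Defs
  imports Main
begin

text \<open>An exponential vector space over a field 'k, with underlying set the whole type 'x.
  le is the partial order, add the addition, th the identity, sm the scalar multiplication.\<close>

definition primitive :: "('x \<Rightarrow> 'x \<Rightarrow> bool) \<Rightarrow> 'x set" where
  "primitive le = {z. \<forall>y. y \<noteq> z \<longrightarrow> \<not> le y z}"

definition evs :: "('x \<Rightarrow> 'x \<Rightarrow> bool) \<Rightarrow> ('x \<Rightarrow> 'x \<Rightarrow> 'x) \<Rightarrow> 'x
    \<Rightarrow> ('k::field \<Rightarrow> 'x \<Rightarrow> 'x) \<Rightarrow> bool" where
  "evs le add th sm \<longleftrightarrow>
     \<comment> \<open>partial order\<close>
     (\<forall>x. le x x) \<and> (\<forall>x y. le x y \<and> le y x \<longrightarrow> x = y) \<and>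
     (\<forall>x y z. le x y \<and> le y z \<longrightarrow> le x z) \<and>
     \<comment> \<open>(A1)\<close>
     (\<forall>x y z. add (add x y) z = add x (add y z)) \<and> (\<forall>x y. add x y = add y x) \<and>
     (\<forall>x. add x th = x) \<and>
     \<comment> \<open>(A2)\<close>
     (\<forall>x y z. le x y \<longrightarrow> le (add x z) (add y z)) \<and>
     (\<forall>x y a. le x y \<longrightarrow> le (sm a x) (sm a y)) \<and>
     \<comment> \<open>(A3)\<close>
     (\<forall>a x y. sm a (add x y) = add (sm a x) (sm a y)) \<and>
     (\<forall>a b x. sm a (sm b x) = sm (a * b) x) \<and>
     (\<forall>a b x. le (sm (a + b) x) (add (sm a x) (sm b x))) \<and>
     (\<forall>x. sm 1 x = x) \<and>
     \<comment> \<open>(A4)\<close>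
     (\<forall>a x. sm a x = th \<longleftrightarrow> a = 0 \<or> x = th) \<and>
     \<comment> \<open>(A5)\<close>
     (\<forall>x. add x (sm (-1) x) = th \<longleftrightarrow> x \<in> primitive le) \<and>
     \<comment> \<open>(A6)\<close>
     (\<forall>x. \<exists>p \<in> primitive le. le p x)"

definition Lset :: "('x \<Rightarrow> 'x \<Rightarrow> bool) \<Rightarrow> ('x \<Rightarrow> 'x \<Rightarrow> 'x)
    \<Rightarrow> ('k::field \<Rightarrow> 'x \<Rightarrow> 'x) \<Rightarrow> 'x \<Rightarrow> 'x set" where
  "Lset le add sm x = {z. \<exists>a p. a \<noteq> 0 \<and> p \<in> primitive le \<and> le (add (sm a x) p) z}"

definition feasible :: "('x \<Rightarrow> 'x \<Rightarrow> bool) \<Rightarrow> ('x \<Rightarrow> 'x \<Rightarrow> 'x)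
    \<Rightarrow> ('k::field \<Rightarrow> 'x \<Rightarrow> 'x) \<Rightarrow> 'x set" where
  "feasible le add sm = {x. x \<notin> primitive le \<and>
      ({z. le z x} - primitive le) \<subseteq> Lset le add sm x}"

end

theory Submission
  imports Defs
begin

text \<open>Since \<open>L(x)\<close> is an up-set, \<open>y \<le> x\<close> gives \<open>L(x) \<subseteq> L(y)\<close>. Conversely, feasibility of \<open>x\<close>
  puts \<open>y\<close> into \<open>L(x)\<close>, say \<open>y \<ge> a x + p\<close>; then \<open>b y + q \<ge> (b a) x + (b p + q)\<close>, and \<open>b p + q\<close>
  is again primitive, so \<open>L(y) \<subseteq> L(x)\<close>.\<close>

locale evs_space =
  fixes le :: "'x \<Rightarrow> 'x \<Rightarrow> bool" and add :: "'x \<Rightarrow> 'x \<Rightarrow> 'x" and th :: 'x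
    and sm :: "'k::field \<Rightarrow> 'x \<Rightarrow> 'x"
  assumes evs: "evs le add th sm"
begin

lemma evs_trans: "le a b \<Longrightarrow> le b c \<Longrightarrow> le a c"
  using evs unfolding evs_def by (elim conjE) metis

lemma evs_add_mono: "le a b \<Longrightarrow> le (add a c) (add b c)"
  using evs unfolding evs_def by (elim conjE) metis

lemma evs_smult_mono: "le a b \<Longrightarrow> le (sm k a) (sm k b)"
  using evs unfolding evs_def by (elim conjE) metis

lemma evs_add_assoc: "add (add a b) c = add a (add b c)"
  using evs unfolding evs_def by (elim conjE) metis

lemma evs_add_commute: "add a b = add b a"
  using evs unfolding evs_def by (elim conjE) metis

lemma evs_add_zero: "add a th = a"
  using evs unfolding evs_def by (elim conjE) metis

lemma evs_smult_add: "sm k (add a b) = add (sm k a) (sm k b)"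
  using evs unfolding evs_def by (elim conjE) metis

lemma evs_smult_smult: "sm k (sm l a) = sm (k * l) a"
  using evs unfolding evs_def by (elim conjE) metis

lemma evs_smult_zero: "sm k th = th"
  using evs unfolding evs_def by (elim conjE) metis

lemma primitive_iff: "p \<in> primitive le \<longleftrightarrow> add p (sm (-1) p) = th"
  using evs unfolding evs_def by (elim conjE) metis

lemma primitive_add:
  assumes "p \<in> primitive le" "q \<in> primitive le"
  shows "add p q \<in> primitive le"
proof -
  have "add (add p q) (sm (-1) (add p q)) = add (add p (sm (-1) p)) (add q (sm (-1) q))"
    by (metis evs_smult_add evs_add_assoc evs_add_commute)
  also have "\<dots> = th"
    using assms by (simp add: primitive_iff evs_add_zero)
  finally show ?thesis
    by (simp add: primitive_iff)
qed

lemma primitive_smult: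
  assumes "p \<in> primitive le"
  shows "sm k p \<in> primitive le"
proof -
  have "add (sm k p) (sm (-1) (sm k p)) = sm k (add p (sm (-1) p))"
    by (simp add: evs_smult_add evs_smult_smult mult.commute)
  also have "\<dots> = th"
    using assms by (simp add: primitive_iff evs_smult_zero)
  finally show ?thesis
    by (simp add: primitive_iff)
qed

lemma Lset_antimono:
  assumes "le y x"
  shows "Lset le add sm x \<subseteq> Lset le add sm y"
proof
  fix z
  assume "z \<in> Lset le add sm x"
  then obtain b q where "b \<noteq> 0" "q \<in> primitive le" "le (add (sm b x) q) z"
    unfolding Lset_def by blast
  moreover have "le (add (sm b y) q) (add (sm b x) q)"
    using assms by (intro evs_add_mono evs_smult_mono)
  ultimately show "z \<in> Lset le add sm y"
    unfolding Lset_def by (blast intro: evs_trans)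
qed

lemma Lset_subset_if_mem:
  assumes "y \<in> Lset le add sm x"
  shows "Lset le add sm y \<subseteq> Lset le add sm x"
proof
  obtain a p where a: "a \<noteq> 0" and p: "p \<in> primitive le" and y: "le (add (sm a x) p) y"
    using assms unfolding Lset_def by blast
  fix z
  assume "z \<in> Lset le add sm y"
  then obtain b q where b: "b \<noteq> 0" and q: "q \<in> primitive le" and z: "le (add (sm b y) q) z"
    unfolding Lset_def by blast
  have "add (sm b (add (sm a x) p)) q = add (sm (b * a) x) (add (sm b p) q)"
    by (simp add: evs_smult_add evs_smult_smult evs_add_assoc)
  moreover have "le (add (sm b (add (sm a x) p)) q) (add (sm b y) q)"
    using y by (intro evs_add_mono evs_smult_mono)
  ultimately have "le (add (sm (b * a) x) (add (sm b p) q)) z"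
    using z by (metis evs_trans)
  moreover have "add (sm b p) q \<in> primitive le"
    using p q by (intro primitive_add primitive_smult)
  moreover have "b * a \<noteq> 0"
    using a b by simp
  ultimately show "z \<in> Lset le add sm x"
    unfolding Lset_def by blast
qed

end

theorem mainTheorem17:
  fixes le :: "'x \<Rightarrow> 'x \<Rightarrow> bool" and add :: "'x \<Rightarrow> 'x \<Rightarrow> 'x" and th :: 'x
    and sm :: "'k::field \<Rightarrow> 'x \<Rightarrow> 'x" and x y :: 'x
  assumes "evs le add th sm"
    and "x \<in> feasible le add sm"
    and "y \<notin> primitive le" and "le y x"
  shows "Lset le add sm x = Lset le add sm y"
proof -
  interpret evs_space le add th sm
    using assms(1) by unfold_locales
  have "y \<in> Lset le add sm x"
    using assms(2-4) unfolding feasible_def by blast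
  then show ?thesis
    using Lset_antimono[OF assms(4)] Lset_subset_if_mem by blast
qed

end
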